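(* For every integer $N\ge 3$, the number of tuples $(\mu_1,\mu_2;d_1,d_2)\in P^2\times\mathbb Z^2$ with $d_1+d_2$ odd and $$2|\mu_1|+22|\mu_2|+2\binom{d_1}{2}+22\binom{d_2}{2}+d_1+11d_2=N$$ equals the number of tuples $(\alpha_1,\alpha_2;e_1,e_2)\in P^2\times\mathbb Z^2$ with $e_1+e_2$ odd and $$2|\alpha_1|+22|\alpha_2|+2\binom{e_1}{2}+22\binom{e_2}{2}+3=N.$$
   Context: $P$ denotes the set of all integer partitions into positive parts (including the empty partition); for a partition $\lambda$, $|\lambda|$ is the sum of its parts. For $d\in\mathbb Z$, $\binom{d}{2}=d(d-1)/2$. *)

theory Defs
  imports Main
begin

definition Partitions :: "nat list set" where
  "Partitions = {xs. sorted_wrt (\<ge>) xs \<and> (\<forall>x\<in>set xs. 0 < x)}"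

definition psize :: "nat list \<Rightarrow> int" where
  "psize xs = int (sum_list xs)"

definition binom2 :: "int \<Rightarrow> int" where
  "binom2 d = d * (d - 1) div 2"

end

theory Submission
  imports Defs
begin

(*
  Group the tuples (mu1, mu2, d1, d2) by the weight w = 2|mu1| + 22|mu2|: the left side
  is the sum over partition pairs of A(N - w), where A(n) counts
  d1^2 + 11 d2^2 = n with d1 + d2 odd; likewise the right side sums B(N - w), where B(n)
  counts e1(e1 - 1) + 11 e2(e2 - 1) + 3 = n with e1 + e2 odd.

  Linear substitutions identify A(n) and B(n) with the points of
  X^2 + 11 Y^2 = 12 n, Y odd, in the classes Y = X resp. Y = X + 6 (mod 12).  In each class
  the points with X = 1 (mod 6) correspond to pairs (j, k) with 1 + 2 pent j + 22 pent k = n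
  and j + k even resp. odd, via X = 6j + 1, Y = 6k + 1; negation matches X = 5 with X = 1;
  and Y -> -Y matches the points with X = 3 (mod 6) of the two classes.

  A Franklin-type involution on (j, lambda), preserving
  |lambda| + pent j and changing j by one, has (0, []) as its only fixed point.  Applied to
  (j, mu1), or to (k, mu2) when (j, mu1) is fixed, it pairs the configurations
  ((mu1, mu2), (j, k)) of total weight N with j + k even and odd whenever N <> 1.
*)

definition pent :: "int \<Rightarrow> int" where
  "pent j = (3*j*j + j) div 2"

lemma two_pent: "2 * pent j = 3*j*j + j"
proof -
  have "even (3*j*j + j)" by auto
  then show ?thesis unfolding pent_def by simp
qed

lemma pent_nonneg: "0 \<le> pent j"
proof -
  have "0 \<le> j * (3*j + 1)"
    by (cases "0 \<le> j") (simp_all add: mult_nonpos_nonpos)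
  then show ?thesis using two_pent[of j] by (simp add: algebra_simps)
qed

text \<open>How \<open>pent\<close> changes when the index moves down or up by one; this is what the
  flip below has to compensate in the partition.\<close>
lemma pent_pred: "pent (j - 1) = pent j - 3*j + 1"
  using two_pent[of j] two_pent[of "j - 1"] by (simp add: algebra_simps)

lemma pent_succ: "pent (j + 1) = pent j + 3*j + 2"
  using two_pent[of j] two_pent[of "j + 1"] by (simp add: algebra_simps)

lemma two_binom2: "2 * binom2 d = d * (d - 1)"
proof -
  have "even (d * (d - 1))" by auto
  then show ?thesis unfolding binom2_def by simp
qed

lemma psize_nonneg: "0 \<le> psize xs"
  unfolding psize_def by simp

lemma mult_pred_nonneg: "0 \<le> (e::int) * (e - 1)"
  by (cases "0 < e") (simp_all add: mult_nonpos_nonpos)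

lemma sum_map_Suc: "sum_list (map Suc xs) = sum_list xs + length xs"
  using sum_list_Suc[of "\<lambda>x. x" xs] by simp

definition largest :: "nat list \<Rightarrow> nat" where
  "largest xs = (case xs of [] \<Rightarrow> 0 | a # _ \<Rightarrow> a)"

lemma part_cons:
  "a # xs \<in> Partitions \<longleftrightarrow> 0 < a \<and> (\<forall>y\<in>set xs. y \<le> a) \<and> xs \<in> Partitions"
  unfolding Partitions_def by auto

lemma part_append:
  "xs @ ys \<in> Partitions \<longleftrightarrow>
     xs \<in> Partitions \<and> ys \<in> Partitions \<and> (\<forall>x\<in>set xs. \<forall>y\<in>set ys. y \<le> x)"
  unfolding Partitions_def by (auto simp: sorted_wrt_append)

lemma part_pos: "xs \<in> Partitions \<Longrightarrow> x \<in> set xs \<Longrightarrow> 0 < x"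
  unfolding Partitions_def by auto

lemma part_le_largest: "xs \<in> Partitions \<Longrightarrow> x \<in> set xs \<Longrightarrow> x \<le> largest xs"
  by (cases xs) (auto simp: largest_def part_cons)

lemma part_tl: "xs \<in> Partitions \<Longrightarrow> tl xs \<in> Partitions"
  by (cases xs) (auto simp: part_cons)

lemma part_map_pred:
  "xs \<in> Partitions \<Longrightarrow> \<forall>x\<in>set xs. 1 < x \<Longrightarrow> map (\<lambda>x. x - 1) xs \<in> Partitions"
  unfolding Partitions_def by (auto simp: sorted_wrt_map elim!: sorted_wrt_mono_rel[rotated])

lemma part_map_Suc: "xs \<in> Partitions \<Longrightarrow> map Suc xs \<in> Partitions"
  unfolding Partitions_def by (auto simp: sorted_wrt_map elim!: sorted_wrt_mono_rel[rotated])

lemma part_replicate_one: "replicate n 1 \<in> Partitions"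
  unfolding Partitions_def by (auto simp: sorted_wrt_iff_nth_less)

lemma part_cons_largest: "xs \<in> Partitions \<Longrightarrow> filter (\<lambda>x. 0 < x) (largest xs # tl xs) = xs"
  by (cases xs) (auto simp: largest_def part_cons filter_id_conv Partitions_def)

lemma partition_split_ones:
  assumes xs: "xs \<in> Partitions"
  obtains P k where "xs = P @ replicate k 1" "P \<in> Partitions" "\<forall>x\<in>set P. 1 < x"
proof -
  define P where "P = takeWhile (\<lambda>x. 1 < x) xs"
  have "\<forall>x\<in>set (dropWhile (\<lambda>x. 1 < x) xs). x = 1"
    using xs
  proof (induction xs)
    case (Cons a xs)
    then have a: "0 < a" "\<forall>y\<in>set xs. y \<le> a" "xs \<in> Partitions"
      by (auto simp: part_cons)
    show ?case
    proof (cases "1 < a")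
      case False
      then have "a = 1" "\<forall>y\<in>set xs. y = 1"
        using a part_pos[OF a(3)] by force+
      then show ?thesis by simp
    qed (use Cons a in simp)
  qed simp
  then have split: "xs = P @ replicate (length (dropWhile (\<lambda>x. 1 < x) xs)) 1"
    unfolding P_def by (metis replicate_length_same takeWhile_dropWhile_id)
  moreover have "\<forall>x\<in>set P. 1 < x" unfolding P_def by (auto dest: set_takeWhileD)
  moreover have "P \<in> Partitions" using xs split part_append by metis
  ultimately show ?thesis using that by blast
qed

lemma length_le_sum_list: "\<forall>x\<in>set xs. (0::nat) < x \<Longrightarrow> length xs \<le> sum_list xs"
  by (induction xs) auto

lemma sum_list_map_pred:
  "\<forall>x\<in>set xs. (0::nat) < x \<Longrightarrow>
     int (sum_list (map (\<lambda>x. x - 1) xs)) = int (sum_list xs) - int (length xs)"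
  by (induction xs) auto

text \<open>Franklin-style flip on pairs \<open>(j, \<lambda>)\<close>.\<close>
definition euler_flip :: "int \<times> nat list \<Rightarrow> int \<times> nat list" where
  "euler_flip = (\<lambda>(j, xs).
     if int (length xs) + 3*j \<ge> int (largest xs)
     then (j - 1, filter (\<lambda>x. 0 < x) (nat (int (length xs) + 3*j - 1) # map (\<lambda>x. x - 1) xs))
     else (j + 1, map Suc (tl xs) @
                  replicate (nat (int (largest xs) - 3*j - 2 - int (length (tl xs)))) 1))"

lemma flip_down_shape:
  fixes xs P :: "nat list"
  assumes "xs = P @ replicate k 1" "\<forall>x\<in>set P. 1 < x"
  shows "filter (\<lambda>x. 0 < x) (m # map (\<lambda>x. x - 1) xs) =
           (if 0 < m then [m] else []) @ map (\<lambda>x. x - 1) P"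
  using assms by (auto simp: filter_id_conv)

lemma flip_down_new_part:
  assumes xs: "xs \<in> Partitions" and c: "int (length xs) + 3*j \<ge> int (largest xs)"
    and nz: "int (sum_list xs) + pent j \<noteq> 0"
  shows "0 \<le> int (length xs) + 3*j - 1"
proof (rule ccontr)
  assume "\<not> 0 \<le> int (length xs) + 3*j - 1"
  then have "int (length xs) + 3*j = 0" "largest xs = 0" using c by auto
  then have "xs = []" "j = 0" using xs by (cases xs; auto simp: largest_def part_cons)+
  then show False using nz by (simp add: pent_def)
qed

lemma flip_down:
  assumes xs: "xs \<in> Partitions" and c: "int (length xs) + 3*j \<ge> int (largest xs)"
    and nz: "int (sum_list xs) + pent j \<noteq> 0"
  defines "ys \<equiv> filter (\<lambda>x. 0 < x) (nat (int (length xs) + 3*j - 1) # map (\<lambda>x. x - 1) xs)"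
  shows "euler_flip (j, xs) = (j - 1, ys)" "ys \<in> Partitions"
    "int (sum_list ys) + pent (j - 1) = int (sum_list xs) + pent j"
    "euler_flip (j - 1, ys) = (j, xs)"
proof -
  show "euler_flip (j, xs) = (j - 1, ys)" using c unfolding euler_flip_def ys_def by simp
  obtain P k where xsP: "xs = P @ replicate k 1" and P: "P \<in> Partitions" "\<forall>x\<in>set P. 1 < x"
    using partition_split_ones[OF xs] .
  define m where "m = int (length xs) + 3*j - 1"
  have m_nonneg: "0 \<le> m" unfolding m_def by (rule flip_down_new_part[OF xs c nz])
  have len: "length xs = length P + k" and sum: "sum_list xs = sum_list P + k"
    using xsP by (simp_all add: sum_list_replicate)
  have ys: "ys = (if 0 < nat m then [nat m] else []) @ map (\<lambda>x. x - 1) P"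
    unfolding ys_def m_def[symmetric] using flip_down_shape[OF xsP P(2)] .
  have "\<forall>x\<in>set P. x - 1 \<le> nat m"
    using part_le_largest[OF xs] c unfolding m_def xsP by fastforce
  then show "ys \<in> Partitions"
    unfolding ys using part_map_pred[OF P] by (auto simp: part_cons)
  have "int (sum_list (map (\<lambda>x. x - 1) P)) = int (sum_list P) - int (length P)"
    using P(2) by (intro sum_list_map_pred) auto
  then show "int (sum_list ys) + pent (j - 1) = int (sum_list xs) + pent j"
    unfolding ys using m_nonneg len sum by (auto simp: pent_pred m_def)
  show "euler_flip (j - 1, ys) = (j, xs)"
  proof (cases "0 < nat m")
    case True
    have "map Suc (tl ys) = P" using True P(2) unfolding ys by (auto intro!: map_idI)
    moreover have "nat (int (largest ys) - 3*(j - 1) - 2 - int (length (tl ys))) = k"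
      using True len m_nonneg unfolding ys by (simp add: largest_def m_def)
    moreover have "\<not> int (length ys) + 3*(j - 1) \<ge> int (largest ys)"
      using True len unfolding ys by (simp add: largest_def m_def)
    ultimately show ?thesis unfolding euler_flip_def using xsP by simp
  next
    case False
    then have "\<forall>x\<in>set xs. x \<le> 1" using part_le_largest[OF xs] c unfolding m_def by fastforce
    then have "P = []" using P(2) xsP by (cases P) auto
    then show ?thesis using False m_nonneg len xsP unfolding ys euler_flip_def
      by (simp add: largest_def m_def)
  qed
qed

lemma flip_up:
  assumes xs: "xs \<in> Partitions" and c: "\<not> int (length xs) + 3*j \<ge> int (largest xs)"
  defines "ys \<equiv> map Suc (tl xs) @
                 replicate (nat (int (largest xs) - 3*j - 2 - int (length (tl xs)))) 1"
  shows "euler_flip (j, xs) = (j + 1, ys)" "ys \<in> Partitions"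
    "int (sum_list ys) + pent (j + 1) = int (sum_list xs) + pent j"
    "euler_flip (j + 1, ys) = (j, xs)"
proof -
  show "euler_flip (j, xs) = (j + 1, ys)" using c unfolding euler_flip_def ys_def by simp
  define r where "r = int (largest xs) - 3*j - 2 - int (length (tl xs))"
  have r_nonneg: "0 \<le> r" using c unfolding r_def by (cases xs) (auto simp: largest_def)
  show "ys \<in> Partitions" unfolding ys_def
    using part_map_Suc[OF part_tl[OF xs]] part_replicate_one by (auto simp: part_append)
  have "sum_list xs = largest xs + sum_list (tl xs)" by (cases xs) (auto simp: largest_def)
  then show "int (sum_list ys) + pent (j + 1) = int (sum_list xs) + pent j"
    unfolding ys_def r_def[symmetric] using r_nonneg r_def
    by (simp add: sum_list_replicate sum_map_Suc pent_succ)
  have len: "int (length ys) = int (largest xs) - 3*j - 2"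
    unfolding ys_def r_def[symmetric] using r_nonneg r_def by simp
  have "largest ys \<le> largest xs + 1"
  proof (cases "tl xs")
    case Nil
    then show ?thesis unfolding ys_def by (cases "nat r") (auto simp: largest_def r_def)
  next
    case (Cons b rest)
    then have "b \<le> largest xs" using part_le_largest[OF xs, of b] by (cases xs) auto
    then show ?thesis unfolding ys_def using Cons by (simp add: largest_def)
  qed
  then have "int (length ys) + 3*(j + 1) \<ge> int (largest ys)" using len by simp
  moreover have "nat (int (length ys) + 3*(j + 1) - 1) = largest xs" using len by simp
  moreover have "map (\<lambda>x. x - 1) ys = tl xs @ replicate (nat r) 0"
    unfolding ys_def r_def by (simp add: map_replicate_const comp_def)
  then have "filter (\<lambda>x. 0 < x) (largest xs # map (\<lambda>x. x - 1) ys) = xs"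
    using part_cons_largest[OF xs] by (auto split: if_splits)
  ultimately show "euler_flip (j + 1, ys) = (j, xs)"
    unfolding euler_flip_def by simp
qed

lemma euler_flip_props:
  assumes xs: "xs \<in> Partitions" and nz: "psize xs + pent j \<noteq> 0"
  obtains j' ys where "euler_flip (j, xs) = (j', ys)" "ys \<in> Partitions"
    "psize ys + pent j' = psize xs + pent j"
    "euler_flip (j', ys) = (j, xs)" "j' = j - 1 \<or> j' = j + 1"
proof (cases "int (length xs) + 3*j \<ge> int (largest xs)")
  case True
  from flip_down[OF xs True nz[unfolded psize_def]] that show ?thesis
    unfolding psize_def by blast
next
  case False
  from flip_up[OF xs False] that show ?thesis
    unfolding psize_def by blast
qed

text \<open>Integer solutions of \<open>X\<^sup>2 + 11Y\<^sup>2 = m\<close> are bounded by \<open>|m|\<close>, hence finite in number.\<close>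
lemma abs_le_square_int: "\<bar>x::int\<bar> \<le> x * x"
proof (cases "x = 0")
  case False
  then have "\<bar>x\<bar> * 1 \<le> \<bar>x\<bar> * \<bar>x\<bar>" by (intro mult_left_mono) auto
  then show ?thesis by (simp add: abs_mult[symmetric])
qed simp

lemma finite_ellipse: "finite {(X, Y). (X::int)*X + 11*(Y*Y) = m}"
proof (rule finite_subset)
  show "{(X, Y). (X::int)*X + 11*(Y*Y) = m} \<subseteq> {-\<bar>m\<bar>..\<bar>m\<bar>} \<times> {-\<bar>m\<bar>..\<bar>m\<bar>}"
  proof
    fix p assume "p \<in> {(X, Y). (X::int)*X + 11*(Y*Y) = m}"
    then obtain X Y where p: "p = (X, Y)" "X*X + 11*(Y*Y) = m" by auto
    have "0 \<le> X*X" "0 \<le> Y*Y" by simp_all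
    then have "\<bar>X\<bar> \<le> \<bar>m\<bar>" "\<bar>Y\<bar> \<le> \<bar>m\<bar>"
      using abs_le_square_int[of X] abs_le_square_int[of Y] p(2) by linarith+
    then show "p \<in> {-\<bar>m\<bar>..\<bar>m\<bar>} \<times> {-\<bar>m\<bar>..\<bar>m\<bar>}" using p(1) by auto
  qed
qed simp

definition lattice_class :: "int \<Rightarrow> int \<Rightarrow> (int \<times> int) set" where
  "lattice_class r n = {(X, Y). X*X + 11*(Y*Y) = 12*n \<and> odd Y \<and> 12 dvd (Y - X - 6*r)}"

definition three_part :: "int \<Rightarrow> int \<Rightarrow> (int \<times> int) set" where
  "three_part r n = {(X, Y) \<in> lattice_class r n. X mod 6 = 3}"

definition norm_reps :: "int \<Rightarrow> (int \<times> int) set" where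
  "norm_reps n = {(d1, d2). odd (d1 + d2) \<and> d1*d1 + 11*(d2*d2) = n}"

definition shifted_reps :: "int \<Rightarrow> (int \<times> int) set" where
  "shifted_reps n = {(e1, e2). odd (e1 + e2) \<and> e1*(e1 - 1) + 11*(e2*(e2 - 1)) + 3 = n}"

definition pent_pairs :: "int \<Rightarrow> (int \<times> int) set" where
  "pent_pairs n = {(j, k). 1 + 2 * pent j + 22 * pent k = n}"

definition pent_class :: "int \<Rightarrow> int \<Rightarrow> (int \<times> int) set" where
  "pent_class r n = {(j, k) \<in> pent_pairs n. even (j + k + r)}"

lemma finite_lattice_class: "finite (lattice_class r n)"
  by (rule finite_subset[OF _ finite_ellipse[of "12*n"]]) (auto simp: lattice_class_def)

lemma bij_norm_reps:
  "bij_betw (\<lambda>(d1, d2). (d1 - 11*d2, d1 + d2)) (norm_reps n) (lattice_class 0 n)"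
proof (rule bij_betw_imageI)
  have norm: "(d1 - 11*d2)*(d1 - 11*d2) + 11*((d1 + d2)*(d1 + d2)) = 12*(d1*d1 + 11*(d2*d2))"
    for d1 d2 :: int by algebra
  show "inj_on (\<lambda>(d1, d2). (d1 - 11*d2, d1 + d2)) (norm_reps n)"
    by (auto intro!: inj_onI)
  show "(\<lambda>(d1, d2). (d1 - 11*d2, d1 + d2)) ` norm_reps n = lattice_class 0 n"
  proof (intro equalityI subsetI)
    fix p assume "p \<in> (\<lambda>(d1, d2). (d1 - 11*d2, d1 + d2)) ` norm_reps n"
    then show "p \<in> lattice_class 0 n"
      by (auto simp: norm_reps_def lattice_class_def norm)
  next
    fix p assume "p \<in> lattice_class 0 n"
    then obtain X Y c where p: "p = (X, Y)" "X*X + 11*(Y*Y) = 12*n" "odd Y" "Y - X = 12*c"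
      by (auto simp: lattice_class_def elim!: dvdE)
    have X: "X = Y - 12*c" using p(4) by simp
    have "12*((Y - c)*(Y - c) + 11*(c*c)) = 12*n"
      using p(2) norm[of "Y - c" c] unfolding X by simp
    then have "(Y - c, c) \<in> norm_reps n" "p = (Y - c - 11*c, Y - c + c)"
      using p(1,3) X by (auto simp: norm_reps_def)
    then show "p \<in> (\<lambda>(d1, d2). (d1 - 11*d2, d1 + d2)) ` norm_reps n" by force
  qed
qed

lemma bij_shifted_reps:
  "bij_betw (\<lambda>(e1, e2). (e1 + 11*e2 - 6, e1 - e2)) (shifted_reps n) (lattice_class 1 n)"
proof (rule bij_betw_imageI)
  have norm: "(e1 + 11*e2 - 6)*(e1 + 11*e2 - 6) + 11*((e1 - e2)*(e1 - e2))
                = 12*(e1*(e1 - 1) + 11*(e2*(e2 - 1)) + 3)"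
    for e1 e2 :: int by algebra
  show "inj_on (\<lambda>(e1, e2). (e1 + 11*e2 - 6, e1 - e2)) (shifted_reps n)"
    by (auto intro!: inj_onI)
  show "(\<lambda>(e1, e2). (e1 + 11*e2 - 6, e1 - e2)) ` shifted_reps n = lattice_class 1 n"
  proof (intro equalityI subsetI)
    fix p assume "p \<in> (\<lambda>(e1, e2). (e1 + 11*e2 - 6, e1 - e2)) ` shifted_reps n"
    then obtain e1 e2 where "p = (e1 + 11*e2 - 6, e1 - e2)" "odd (e1 + e2)"
        "e1*(e1 - 1) + 11*(e2*(e2 - 1)) + 3 = n"
      by (auto simp: shifted_reps_def)
    moreover have "e1 - e2 - (e1 + 11*e2 - 6) - 6*1 = 12*(-e2)" by simp
    ultimately show "p \<in> lattice_class 1 n"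
      unfolding lattice_class_def using norm[of e1 e2] by auto
  next
    fix p assume "p \<in> lattice_class 1 n"
    then obtain X Y c where p: "p = (X, Y)" "X*X + 11*(Y*Y) = 12*n" "odd Y" "Y - X - 6 = 12*c"
      by (auto simp: lattice_class_def elim!: dvdE)
    have X: "X = Y - 12*c - 6" using p(4) by simp
    have "12*((Y - c)*(Y - c - 1) + 11*(-c*(-c - 1)) + 3) = 12*n"
      using p(2) norm[of "Y - c" "-c"] unfolding X by simp
    then have "(Y - c, -c) \<in> shifted_reps n" "p = (Y - c + 11*(-c) - 6, Y - c - (-c))"
      using p(1,3) X by (auto simp: shifted_reps_def)
    then show "p \<in> (\<lambda>(e1, e2). (e1 + 11*e2 - 6, e1 - e2)) ` shifted_reps n" by force
  qed
qed

lemma pent_square: "(6*j + 1)*(6*j + 1) = 24 * pent j + 1"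
  using two_pent[of j] by algebra

lemma bij_pent_class:
  "bij_betw (\<lambda>(j, k). (6*j + 1, 6*k + 1)) (pent_class r n)
     {(X, Y) \<in> lattice_class r n. X mod 6 = 1}"
proof (rule bij_betw_imageI)
  have norm: "(6*j + 1)*(6*j + 1) + 11*((6*k + 1)*(6*k + 1)) = 12*(1 + 2*pent j + 22*pent k)"
    for j k using pent_square[of j] pent_square[of k] by simp
  show "inj_on (\<lambda>(j, k). (6*j + 1, 6*k + 1)) (pent_class r n)"
    by (auto intro!: inj_onI)
  show "(\<lambda>(j, k). (6*j + 1, 6*k + 1)) ` pent_class r n = {(X, Y) \<in> lattice_class r n. X mod 6 = 1}"
  proof (intro equalityI subsetI)
    fix p assume "p \<in> (\<lambda>(j, k). (6*j + 1, 6*k + 1)) ` pent_class r n"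
    then obtain j k where "p = (6*j + 1, 6*k + 1)" "1 + 2*pent j + 22*pent k = n" "even (j + k + r)"
      by (auto simp: pent_class_def pent_pairs_def)
    moreover have "12 dvd (6*k + 1 - (6*j + 1) - 6*r)" using \<open>even (j + k + r)\<close> by presburger
    moreover have "odd (6*k + 1)" "(6*j + 1) mod 6 = 1" by presburger+
    ultimately show "p \<in> {(X, Y) \<in> lattice_class r n. X mod 6 = 1}"
      by (simp add: lattice_class_def norm)
  next
    fix p assume "p \<in> {(X, Y) \<in> lattice_class r n. X mod 6 = 1}"
    then obtain X Y where p: "p = (X, Y)" "X*X + 11*(Y*Y) = 12*n" "12 dvd (Y - X - 6*r)" "X mod 6 = 1"
      by (auto simp: lattice_class_def)
    define j k where "j = X div 6" and "k = Y div 6"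
    have "X = 6*j + 1" using p(4) unfolding j_def by presburger
    moreover have "Y = 6*k + 1" using p(3,4) unfolding k_def by presburger
    ultimately have XY: "X = 6*j + 1" "Y = 6*k + 1" .
    have "12 dvd (6*k + 1 - (6*j + 1) - 6*r)" using p(3) unfolding XY .
    then have "even (j + k + r)" by presburger
    moreover have "1 + 2*pent j + 22*pent k = n" using p(2) norm[of j k] unfolding XY by simp
    ultimately have "(j, k) \<in> pent_class r n" by (simp add: pent_class_def pent_pairs_def)
    then show "p \<in> (\<lambda>(j, k). (6*j + 1, 6*k + 1)) ` pent_class r n" using p(1) XY by force
  qed
qed

text \<open>Negation exchanges the lattice points with \<open>X \<equiv> 1\<close> and \<open>X \<equiv> 5 (mod 6)\<close>.\<close>
lemma card_lattice_five:
  "card {(X, Y) \<in> lattice_class r n. X mod 6 = 5} = card {(X, Y) \<in> lattice_class r n. X mod 6 = 1}"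
proof (rule bij_betw_same_card[of "\<lambda>(X, Y). (-X, -Y)"],
       rule bij_betw_byWitness[where f'="\<lambda>(X, Y). (-X, -Y)"])
  have neg: "(-X, -Y) \<in> lattice_class r n" if "(X, Y) \<in> lattice_class r n" for X Y
  proof -
    have "12 dvd (Y - X - 6*r)" using that by (simp add: lattice_class_def)
    then have "12 dvd (-Y - -X - 6*r)" by presburger
    then show ?thesis using that by (simp add: lattice_class_def)
  qed
  have "(-X) mod 6 = 1 \<longleftrightarrow> X mod 6 = 5" and "(-X) mod 6 = 5 \<longleftrightarrow> X mod 6 = 1" for X :: int
    by presburger+
  then show "(\<lambda>(X, Y). (-X, -Y)) ` {(X, Y) \<in> lattice_class r n. X mod 6 = 5}
               \<subseteq> {(X, Y) \<in> lattice_class r n. X mod 6 = 1}"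
    and "(\<lambda>(X, Y). (-X, -Y)) ` {(X, Y) \<in> lattice_class r n. X mod 6 = 1}
               \<subseteq> {(X, Y) \<in> lattice_class r n. X mod 6 = 5}"
    using neg by auto
qed auto

text \<open>On lattice points with \<open>X \<equiv> 3 (mod 6)\<close>, the reflection \<open>Y \<mapsto> -Y\<close> exchanges
  the two classes.\<close>
lemma card_three_part: "card (three_part r n) = card (three_part (1 - r) n)"
proof (rule bij_betw_same_card[of "\<lambda>(X, Y). (X, -Y)"],
       rule bij_betw_byWitness[where f'="\<lambda>(X, Y). (X, -Y)"])
  have reflect: "(X, -Y) \<in> three_part (1 - s) n" if "(X, Y) \<in> three_part s n" for X Y s
  proof -
    have h: "X*X + 11*(Y*Y) = 12*n" "odd Y" "12 dvd (Y - X - 6*s)" "X mod 6 = 3"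
      using that by (simp_all add: three_part_def lattice_class_def)
    have "12 dvd (-Y - X - 6*(1 - s))" using h(3,4) by presburger
    then show ?thesis using h(1,2,4) by (simp add: three_part_def lattice_class_def)
  qed
  show "(\<lambda>(X, Y). (X, -Y)) ` three_part r n \<subseteq> three_part (1 - r) n"
    and "(\<lambda>(X, Y). (X, -Y)) ` three_part (1 - r) n \<subseteq> three_part r n"
    using reflect[of _ _ r] reflect[of _ _ "1 - r"] by auto
qed auto

lemma card_lattice_class:
  "card (lattice_class r n) = 2 * card (pent_class r n) + card (three_part r n)"
proof -
  define part where "part c = {(X, Y) \<in> lattice_class r n. X mod 6 = c}" for c :: int
  have "X mod 6 = 1 \<or> X mod 6 = 5 \<or> X mod 6 = 3" if "(X, Y) \<in> lattice_class r n" for X Y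
  proof -
    have "odd Y" "12 dvd (Y - X - 6*r)" using that by (simp_all add: lattice_class_def)
    then show ?thesis by presburger
  qed
  then have split: "lattice_class r n = (part 1 \<union> part 5) \<union> part 3"
    unfolding part_def by auto
  have fin: "finite (part c)" for c
    unfolding part_def using finite_lattice_class by (rule finite_subset[rotated]) auto
  have "card (lattice_class r n) = card (part 1 \<union> part 5) + card (part 3)"
    unfolding split using fin by (intro card_Un_disjoint) (auto simp: part_def)
  also have "card (part 1 \<union> part 5) = card (part 1) + card (part 5)"
    using fin by (intro card_Un_disjoint) (auto simp: part_def)
  also have "card (part 5) = card (part 1)"
    unfolding part_def by (rule card_lattice_five)
  also have "card (part 1) = card (pent_class r n)"
    unfolding part_def by (rule bij_betw_same_card[OF bij_pent_class, symmetric])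
  also have "part 3 = three_part r n"
    unfolding part_def three_part_def ..
  finally show ?thesis by simp
qed

lemma finite_pent_class: "finite (pent_class r n)"
proof -
  have "finite {(X, Y) \<in> lattice_class r n. X mod 6 = 1}"
    by (rule finite_subset[OF _ finite_lattice_class]) auto
  then show ?thesis using bij_betw_finite[OF bij_pent_class] by blast
qed

lemma finite_norm_reps: "finite (norm_reps n)"
  using bij_betw_finite[OF bij_norm_reps] finite_lattice_class by blast

lemma finite_shifted_reps: "finite (shifted_reps n)"
  using bij_betw_finite[OF bij_shifted_reps] finite_lattice_class by blast

text \<open>The lattice identity: \<open>#norm_reps(n) - #shifted_reps(n) = 2 (#even - #odd pentagonal pairs)\<close>,
  stated without subtraction.\<close>
lemma card_norm_reps: "card (norm_reps n) = 2 * card (pent_class 0 n) + card (three_part 0 n)"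
  using bij_betw_same_card[OF bij_norm_reps] card_lattice_class by simp

lemma card_shifted_reps: "card (shifted_reps n) = 2 * card (pent_class 1 n) + card (three_part 0 n)"
  using bij_betw_same_card[OF bij_shifted_reps] card_lattice_class card_three_part[of 1] by simp

definition weight :: "nat list \<times> nat list \<Rightarrow> int" where
  "weight = (\<lambda>(m1, m2). 2 * psize m1 + 22 * psize m2)"

definition part_pairs :: "int \<Rightarrow> (nat list \<times> nat list) set" where
  "part_pairs N = {m. fst m \<in> Partitions \<and> snd m \<in> Partitions \<and> weight m \<le> N}"

definition config :: "int \<Rightarrow> int \<Rightarrow> ((nat list \<times> nat list) \<times> (int \<times> int)) set" where
  "config r N = Sigma (part_pairs N) (\<lambda>m. pent_class r (N - weight m))"

lemma finite_partitions_upto: "finite {xs \<in> Partitions. psize xs \<le> K}"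
proof (rule finite_subset)
  show "{xs \<in> Partitions. psize xs \<le> K} \<subseteq> {xs. set xs \<subseteq> {0..nat K} \<and> length xs \<le> nat K}"
  proof clarify
    fix xs assume xs: "xs \<in> Partitions" "psize xs \<le> K"
    have "length xs \<le> sum_list xs" using length_le_sum_list part_pos[OF xs(1)] by blast
    moreover have "x \<le> sum_list xs" if "x \<in> set xs" for x
      using member_le_sum_list[OF that] by simp
    ultimately show "set xs \<subseteq> {0..nat K} \<and> length xs \<le> nat K"
      using xs(2) unfolding psize_def by fastforce
  qed
qed (rule finite_lists_length_le, simp)

lemma finite_part_pairs: "finite (part_pairs N)"
proof (rule finite_subset)
  show "part_pairs N \<subseteq> {xs \<in> Partitions. psize xs \<le> N} \<times> {xs \<in> Partitions. psize xs \<le> N}"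
    unfolding part_pairs_def weight_def psize_def by auto
qed (intro finite_cartesian_product finite_partitions_upto)

lemma card_config: "card (config r N) = (\<Sum>m\<in>part_pairs N. card (pent_class r (N - weight m)))"
  unfolding config_def using finite_part_pairs finite_pent_class by simp

definition pair_flip ::
  "(nat list \<times> nat list) \<times> (int \<times> int) \<Rightarrow> (nat list \<times> nat list) \<times> (int \<times> int)" where
  "pair_flip = (\<lambda>((m1, m2), (j, k)).
     if psize m1 + pent j \<noteq> 0
     then ((snd (euler_flip (j, m1)), m2), (fst (euler_flip (j, m1)), k))
     else ((m1, snd (euler_flip (k, m2))), (j, fst (euler_flip (k, m2)))))"

text \<open>A configuration is a pair of partitions and a pair of pentagonal indices of total
  weight \<open>N\<close>; the weight bound in \<open>part_pairs\<close> is automatic.\<close>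
lemma mem_config:
  "((m1, m2), (j, k)) \<in> config r N \<longleftrightarrow>
     m1 \<in> Partitions \<and> m2 \<in> Partitions \<and> even (j + k + r) \<and>
     2 * psize m1 + 22 * psize m2 + 1 + 2 * pent j + 22 * pent k = N"
  using pent_nonneg[of j] pent_nonneg[of k]
  by (auto simp: config_def part_pairs_def pent_class_def pent_pairs_def weight_def)

text \<open>For \<open>N \<noteq> 1\<close> the flip is a fixed-point-free involution exchanging the two parity
  classes of configurations: the first coordinate can only be stuck at \<open>(0, [])\<close>, and if
  both were, the total would be \<open>1\<close>.\<close>
lemma pair_flip_props:
  assumes N: "N \<noteq> 1" and x: "x \<in> config r N"
  shows "pair_flip x \<in> config (1 - r) N \<and> pair_flip (pair_flip x) = x"
proof -
  obtain m1 m2 j k where x_def: "x = ((m1, m2), (j, k))" by (metis prod.exhaust)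
  have h: "m1 \<in> Partitions" "m2 \<in> Partitions" "even (j + k + r)"
    "2 * psize m1 + 22 * psize m2 + 1 + 2 * pent j + 22 * pent k = N"
    using x unfolding x_def mem_config by auto
  have parity: "even (j' + k' + (1 - r))" if "j' + k' = j + k - 1 \<or> j' + k' = j + k + 1" for j' k'
    using that h(3) by presburger
  show ?thesis
  proof (cases "psize m1 + pent j \<noteq> 0")
    case True
    with h(1) obtain j' ys where e: "euler_flip (j, m1) = (j', ys)" "ys \<in> Partitions"
      "psize ys + pent j' = psize m1 + pent j" "euler_flip (j', ys) = (j, m1)"
      "j' = j - 1 \<or> j' = j + 1"
      by (rule euler_flip_props)
    have "pair_flip x = ((ys, m2), (j', k))" "pair_flip ((ys, m2), (j', k)) = x"
      unfolding x_def pair_flip_def using True e by simp_all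
    moreover have "((ys, m2), (j', k)) \<in> config (1 - r) N"
      unfolding mem_config using h e parity[of j' k] by auto
    ultimately show ?thesis by simp
  next
    case False
    then have "psize m2 + pent k \<noteq> 0"
      using N h(4) pent_nonneg[of j] psize_nonneg[of m1] by auto
    with h(2) obtain k' ys where e: "euler_flip (k, m2) = (k', ys)" "ys \<in> Partitions"
      "psize ys + pent k' = psize m2 + pent k" "euler_flip (k', ys) = (k, m2)"
      "k' = k - 1 \<or> k' = k + 1"
      by (rule euler_flip_props)
    have "pair_flip x = ((m1, ys), (j, k'))" "pair_flip ((m1, ys), (j, k')) = x"
      unfolding x_def pair_flip_def using False e by simp_all
    moreover have "((m1, ys), (j, k')) \<in> config (1 - r) N"
      unfolding mem_config using h e parity[of j k'] by auto
    ultimately show ?thesis by simp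
  qed
qed

lemma pentagonal_balance:
  assumes "N \<noteq> 1"
  shows "card (config 0 N) = card (config 1 N)"
proof -
  have "x \<in> config 0 N \<Longrightarrow> pair_flip x \<in> config 1 N \<and> pair_flip (pair_flip x) = x"
    and "x \<in> config 1 N \<Longrightarrow> pair_flip x \<in> config 0 N \<and> pair_flip (pair_flip x) = x" for x
    using pair_flip_props[OF assms, of x 0] pair_flip_props[OF assms, of x 1] by simp_all
  then have "bij_betw pair_flip (config 0 N) (config 1 N)"
    by (intro bij_betw_byWitness[where f'=pair_flip]) auto
  then show ?thesis by (rule bij_betw_same_card)
qed

lemma card_tuples_by_weight:
  fixes S :: "int \<Rightarrow> (int \<times> int) set"
  assumes fin: "\<And>n. finite (S n)" and nonneg: "\<And>n p. p \<in> S n \<Longrightarrow> 0 \<le> n"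
  shows "card {(\<mu>1, \<mu>2, d1, d2) | \<mu>1 \<mu>2 d1 d2.
            \<mu>1 \<in> Partitions \<and> \<mu>2 \<in> Partitions \<and> (d1, d2) \<in> S (N - weight (\<mu>1, \<mu>2))}
         = (\<Sum>m\<in>part_pairs N. card (S (N - weight m)))"
proof -
  let ?flat = "\<lambda>((\<mu>1, \<mu>2), (d1, d2)). (\<mu>1, \<mu>2, d1, d2)"
  have "{(\<mu>1, \<mu>2, d1, d2) | \<mu>1 \<mu>2 d1 d2.
            \<mu>1 \<in> Partitions \<and> \<mu>2 \<in> Partitions \<and> (d1, d2) \<in> S (N - weight (\<mu>1, \<mu>2))}
        = ?flat ` Sigma (part_pairs N) (\<lambda>m. S (N - weight m))"
    using nonneg by (force simp: part_pairs_def)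
  moreover have "inj_on ?flat (Sigma (part_pairs N) (\<lambda>m. S (N - weight m)))"
    by (rule inj_onI) auto
  ultimately show ?thesis
    using finite_part_pairs fin by (simp add: card_image)
qed

lemma norm_reps_nonneg: "p \<in> norm_reps n \<Longrightarrow> 0 \<le> n"
  by (auto simp: norm_reps_def add_nonneg_nonneg)

lemma shifted_reps_nonneg: "p \<in> shifted_reps n \<Longrightarrow> 0 \<le> n"
  using mult_pred_nonneg by (force simp: shifted_reps_def)

text \<open>Since \<open>2 binom2 d + d = d\<^sup>2\<close>, the two sides of the theorem are sums of \<open>#norm_reps\<close>
  resp. \<open>#shifted_reps\<close> over the partition pairs.\<close>
lemma card_lhs_tuples:
  "card {(\<mu>1, \<mu>2, d1, d2) | \<mu>1 \<mu>2 (d1::int) (d2::int).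
            \<mu>1 \<in> Partitions \<and> \<mu>2 \<in> Partitions \<and> odd (d1 + d2) \<and>
            2 * psize \<mu>1 + 22 * psize \<mu>2 + 2 * binom2 d1 + 22 * binom2 d2 + d1 + 11 * d2 = N}
   = (\<Sum>m\<in>part_pairs N. card (norm_reps (N - weight m)))"
proof -
  have "(2 * psize \<mu>1 + 22 * psize \<mu>2 + 2 * binom2 d1 + 22 * binom2 d2 + d1 + 11 * d2 = N)
      \<longleftrightarrow> d1*d1 + 11*(d2*d2) = N - weight (\<mu>1, \<mu>2)" for \<mu>1 \<mu>2 d1 d2
    using two_binom2[of d1] two_binom2[of d2] by (simp add: weight_def right_diff_distrib) linarith
  then show ?thesis
    using card_tuples_by_weight[of norm_reps, OF finite_norm_reps norm_reps_nonneg]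
    by (simp add: norm_reps_def conj_commute)
qed

lemma card_rhs_tuples:
  "card {(\<alpha>1, \<alpha>2, e1, e2) | \<alpha>1 \<alpha>2 (e1::int) (e2::int).
            \<alpha>1 \<in> Partitions \<and> \<alpha>2 \<in> Partitions \<and> odd (e1 + e2) \<and>
            2 * psize \<alpha>1 + 22 * psize \<alpha>2 + 2 * binom2 e1 + 22 * binom2 e2 + 3 = N}
   = (\<Sum>m\<in>part_pairs N. card (shifted_reps (N - weight m)))"
proof -
  have "(2 * psize \<alpha>1 + 22 * psize \<alpha>2 + 2 * binom2 e1 + 22 * binom2 e2 + 3 = N)
      \<longleftrightarrow> e1*(e1 - 1) + 11*(e2*(e2 - 1)) + 3 = N - weight (\<alpha>1, \<alpha>2)" for \<alpha>1 \<alpha>2 e1 e2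
    using two_binom2[of e1] two_binom2[of e2] by (simp add: weight_def) linarith
  then show ?thesis
    using card_tuples_by_weight[of shifted_reps, OF finite_shifted_reps shifted_reps_nonneg]
    by (simp add: shifted_reps_def conj_commute)
qed

text \<open>Main theorem: both sides equal \<open>2 #config + \<Sigma>#three_part\<close>, for the even resp.
  odd configurations, and these are balanced by Euler's involution.\<close>
theorem lemma3p12:
  fixes N :: int
  assumes "N \<ge> 3"
  shows "card {(\<mu>1, \<mu>2, d1, d2) | \<mu>1 \<mu>2 (d1::int) (d2::int).
            \<mu>1 \<in> Partitions \<and> \<mu>2 \<in> Partitions \<and> odd (d1 + d2) \<and>
            2 * psize \<mu>1 + 22 * psize \<mu>2 + 2 * binom2 d1 + 22 * binom2 d2 + d1 + 11 * d2 = N}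
       = card {(\<alpha>1, \<alpha>2, e1, e2) | \<alpha>1 \<alpha>2 (e1::int) (e2::int).
            \<alpha>1 \<in> Partitions \<and> \<alpha>2 \<in> Partitions \<and> odd (e1 + e2) \<and>
            2 * psize \<alpha>1 + 22 * psize \<alpha>2 + 2 * binom2 e1 + 22 * binom2 e2 + 3 = N}"
proof -
  let ?threes = "\<Sum>m\<in>part_pairs N. card (three_part 0 (N - weight m))"
  have "(\<Sum>m\<in>part_pairs N. card (norm_reps (N - weight m))) = 2 * card (config 0 N) + ?threes"
    by (simp add: card_norm_reps card_config sum.distrib sum_distrib_left)
  also have "\<dots> = 2 * card (config 1 N) + ?threes"
    using assms by (simp add: pentagonal_balance)
  also have "\<dots> = (\<Sum>m\<in>part_pairs N. card (shifted_reps (N - weight m)))"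
    by (simp add: card_shifted_reps card_config sum.distrib sum_distrib_left)
  finally show ?thesis
    unfolding card_lhs_tuples card_rhs_tuples .
qed

end
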